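(* For $n>2$, the groups $G_{n,\mathcal{D}}^2$ and $G_{n+1}^2/N$ are isomorphic, where $N$ is the normal subgroup of $G_{n+1}^2$ generated by all commutators $a_{i(n+1)}a_{j(n+1)}a_{i(n+1)}^{-1}a_{j(n+1)}^{-1}$, $i,j\in\{1,\dots,n\}$.
   Context: $G_{N}^2$ is the group with generators $a_{ij}=a_{\{i,j\}}$ for $2$-element subsets $\{i,j\}\subset\{1,\dots,N\}$ and relations $a_{ij}^2=1$; $a_{ij}a_{kl}=a_{kl}a_{ij}$ for distinct $i,j,k,l$; $a_{ij}a_{ik}a_{jk}=a_{jk}a_{ik}a_{ij}$ for distinct $i,j,k$. $G_{n,\mathcal{D}}^2$ has generators $a_{ij}$ ($\{i,j\}\subset\{1,\dots,n\}$) and $\tau_i$ ($1\le i\le n$) with relations: $a_{ij}^2=1$; $a_{ij}a_{kl}=a_{kl}a_{ij}$ for distinct $i,j,k,l$; $a_{ij}a_{ik}a_{jk}=a_{jk}a_{ik}a_{ij}$ for distinct $i,j,k$; $\tau_i^2=1$; $\tau_i\tau_j=\tau_j\tau_i$; $\tau_i\tau_ja_{ij}\tau_j\tau_i=a_{ij}$; $a_{ij}\tau_k=\tau_ka_{ij}$ for distinct $i,j,k$. *)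

theory Defs
  imports "HOL-Algebra.Algebra"
begin

text \<open>A word over generators of type 'g: a list of letters (x, b), where b = False
means the generator x and b = True means its inverse.\<close>

type_synonym 'g word = "('g \<times> bool) list"

definition words :: "'g set \<Rightarrow> 'g word set" where
  "words S = lists (S \<times> UNIV)"

inductive_set pres_rel :: "'g set \<Rightarrow> ('g word \<times> 'g word) set \<Rightarrow> ('g word \<times> 'g word) set"
  for S E where
    refl: "w \<in> words S \<Longrightarrow> (w, w) \<in> pres_rel S E"
  | sym: "(u, v) \<in> pres_rel S E \<Longrightarrow> (v, u) \<in> pres_rel S E"
  | trans: "(u, v) \<in> pres_rel S E \<Longrightarrow> (v, w) \<in> pres_rel S E \<Longrightarrow> (u, w) \<in> pres_rel S E"
  | cancel: "x \<in> S \<Longrightarrow> ([(x, b), (x, \<not> b)], []) \<in> pres_rel S E"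
  | rel: "(u, v) \<in> E \<Longrightarrow> u \<in> words S \<Longrightarrow> v \<in> words S \<Longrightarrow> (u, v) \<in> pres_rel S E"
  | cong: "(u, v) \<in> pres_rel S E \<Longrightarrow> (u', v') \<in> pres_rel S E \<Longrightarrow> (u @ u', v @ v') \<in> pres_rel S E"

definition presented_group :: "'g set \<Rightarrow> ('g word \<times> 'g word) set \<Rightarrow> 'g word set monoid" where
  "presented_group S E =
     \<lparr> carrier = words S // pres_rel S E,
       monoid.mult = (\<lambda>A B. \<Union>a\<in>A. \<Union>b\<in>B. pres_rel S E `` {a @ b}),
       monoid.one = pres_rel S E `` {[]} \<rparr>"

definition pres_gen :: "'g set \<Rightarrow> ('g word \<times> 'g word) set \<Rightarrow> 'g \<Rightarrow> 'g word set" where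
  "pres_gen S E x = pres_rel S E `` {[(x, False)]}"

definition normal_closure :: "('a, 'b) monoid_scheme \<Rightarrow> 'a set \<Rightarrow> 'a set" where
  "normal_closure Gr Y =
     generate Gr (\<Union>g\<in>carrier Gr. (\<lambda>x. monoid.mult Gr (monoid.mult Gr g x) (m_inv Gr g)) ` Y)"

abbreviation g1 :: "'g \<Rightarrow> 'g word" where "g1 x \<equiv> [(x, False)]"

text \<open>Generators a_{ij} of G_N^2 are indexed by 2-element subsets of {1..N}.\<close>

definition GN_gens :: "nat \<Rightarrow> nat set set" where
  "GN_gens N = {{i, j} | i j. i \<in> {1..N} \<and> j \<in> {1..N} \<and> i \<noteq> j}"

definition GN_rels :: "nat \<Rightarrow> (nat set word \<times> nat set word) set" where
  "GN_rels N =
     {(g1 {i,j} @ g1 {i,j}, []) | i j. i \<in> {1..N} \<and> j \<in> {1..N} \<and> i \<noteq> j}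
   \<union> {(g1 {i,j} @ g1 {k,l}, g1 {k,l} @ g1 {i,j}) | i j k l.
        i \<in> {1..N} \<and> j \<in> {1..N} \<and> k \<in> {1..N} \<and> l \<in> {1..N} \<and>
        distinct [i, j, k, l]}
   \<union> {(g1 {i,j} @ g1 {i,k} @ g1 {j,k}, g1 {j,k} @ g1 {i,k} @ g1 {i,j}) | i j k.
        i \<in> {1..N} \<and> j \<in> {1..N} \<and> k \<in> {1..N} \<and> distinct [i, j, k]}"

definition G2 :: "nat \<Rightarrow> nat set word set monoid" where
  "G2 N = presented_group (GN_gens N) (GN_rels N)"

definition a_G2 :: "nat \<Rightarrow> nat \<Rightarrow> nat \<Rightarrow> nat set word set" where
  "a_G2 N i j = pres_gen (GN_gens N) (GN_rels N) {i, j}"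

text \<open>Generators of G_{n,D}^2: Inl {i,j} is a_{ij}, Inr i is tau_i.\<close>

definition GD_gens :: "nat \<Rightarrow> (nat set + nat) set" where
  "GD_gens n = Inl ` GN_gens n \<union> Inr ` {1..n}"

definition GD_rels :: "nat \<Rightarrow> ((nat set + nat) word \<times> (nat set + nat) word) set" where
  "GD_rels n =
     {(g1 (Inl {i,j}) @ g1 (Inl {i,j}), []) | i j. i \<in> {1..n} \<and> j \<in> {1..n} \<and> i \<noteq> j}
   \<union> {(g1 (Inl {i,j}) @ g1 (Inl {k,l}), g1 (Inl {k,l}) @ g1 (Inl {i,j})) | i j k l.
        i \<in> {1..n} \<and> j \<in> {1..n} \<and> k \<in> {1..n} \<and> l \<in> {1..n} \<and> distinct [i, j, k, l]}
   \<union> {(g1 (Inl {i,j}) @ g1 (Inl {i,k}) @ g1 (Inl {j,k}),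
        g1 (Inl {j,k}) @ g1 (Inl {i,k}) @ g1 (Inl {i,j})) | i j k.
        i \<in> {1..n} \<and> j \<in> {1..n} \<and> k \<in> {1..n} \<and> distinct [i, j, k]}
   \<union> {(g1 (Inr i) @ g1 (Inr i), []) | i. i \<in> {1..n}}
   \<union> {(g1 (Inr i) @ g1 (Inr j), g1 (Inr j) @ g1 (Inr i)) | i j. i \<in> {1..n} \<and> j \<in> {1..n}}
   \<union> {(g1 (Inr i) @ g1 (Inr j) @ g1 (Inl {i,j}) @ g1 (Inr j) @ g1 (Inr i), g1 (Inl {i,j})) | i j.
        i \<in> {1..n} \<and> j \<in> {1..n} \<and> i \<noteq> j}
   \<union> {(g1 (Inl {i,j}) @ g1 (Inr k), g1 (Inr k) @ g1 (Inl {i,j})) | i j k.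
        i \<in> {1..n} \<and> j \<in> {1..n} \<and> k \<in> {1..n} \<and> distinct [i, j, k]}"

definition G2D :: "nat \<Rightarrow> (nat set + nat) word set monoid" where
  "G2D n = presented_group (GD_gens n) (GD_rels n)"

end

theory Submission
  imports Defs
begin

(* Sending a_{i,n+1} to tau_i and fixing the other a_{ij} respects the defining relations
   of G_{n+1}^2: the relations involving n+1 become tau_i^2 = 1, the commutation of a_{ij}
   with tau_k, and, for the triangle relation on {i, j, n+1}, the statement that a_{ij}
   commutes with the involution tau_i tau_j, which is the defining relation
   tau_i tau_j a_{ij} tau_j tau_i = a_{ij}.  This gives an epimorphism
   phi : G_{n+1}^2 -> G_{n,D}^2 which kills N because the tau_i commute.  Conversely,
   tau_i |-> a_{i,n+1} N defines psi : G_{n,D}^2 -> G_{n+1}^2 / N, since the a_{i,n+1}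
   commute modulo N.  On generators psi o phi is the canonical projection, hence
   ker phi = N and the first isomorphism theorem applies. *)

section \<open>Presented groups\<close>

abbreviation pres_class :: "'g set \<Rightarrow> ('g word \<times> 'g word) set \<Rightarrow> 'g word \<Rightarrow> 'g word set" where
  "pres_class S E w \<equiv> pres_rel S E `` {w}"

lemma words_Nil [simp]: "[] \<in> words S"
  by (simp add: words_def)

lemma words_Cons [simp]: "a # w \<in> words S \<longleftrightarrow> fst a \<in> S \<and> w \<in> words S"
  by (cases a) (auto simp: words_def)

lemma words_append [simp]: "u @ v \<in> words S \<longleftrightarrow> u \<in> words S \<and> v \<in> words S"
  by (auto simp: words_def)

lemma pres_rel_words: "(u, v) \<in> pres_rel S E \<Longrightarrow> u \<in> words S \<and> v \<in> words S"
  by (induction rule: pres_rel.induct) auto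

lemma equiv_pres_rel: "equiv (words S) (pres_rel S E)"
proof (rule equivI)
  show "pres_rel S E \<subseteq> words S \<times> words S"
    using pres_rel_words by fast
  show "refl_on (words S) (pres_rel S E)"
    unfolding refl_on_def by (blast intro: pres_rel.refl)
  show "sym (pres_rel S E)"
    unfolding sym_def by (blast intro: pres_rel.sym)
  show "trans (pres_rel S E)"
    unfolding trans_def by (blast intro: pres_rel.trans)
qed

lemma pres_class_eq_iff:
  "u \<in> words S \<Longrightarrow> v \<in> words S \<Longrightarrow> pres_class S E u = pres_class S E v \<longleftrightarrow> (u, v) \<in> pres_rel S E"
  by (rule eq_equiv_class_iff[OF equiv_pres_rel])

lemma presented_group_carrier:
  "C \<in> carrier (presented_group S E) \<longleftrightarrow> (\<exists>w \<in> words S. C = pres_class S E w)"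
  by (auto simp: presented_group_def quotient_def)

lemma pres_class_in_carrier: "w \<in> words S \<Longrightarrow> pres_class S E w \<in> carrier (presented_group S E)"
  by (auto simp: presented_group_carrier)

lemma presented_group_one: "\<one>\<^bsub>presented_group S E\<^esub> = pres_class S E []"
  by (simp add: presented_group_def)

lemma presented_group_mult:
  assumes "u \<in> words S" "v \<in> words S"
  shows "pres_class S E u \<otimes>\<^bsub>presented_group S E\<^esub> pres_class S E v = pres_class S E (u @ v)"
proof -
  have "(\<Union>a \<in> pres_class S E u. \<Union>b \<in> pres_class S E v. pres_class S E (a @ b)) = pres_class S E (u @ v)"
  proof
    show "(\<Union>a \<in> pres_class S E u. \<Union>b \<in> pres_class S E v. pres_class S E (a @ b)) \<subseteq> pres_class S E (u @ v)"
      by (blast intro: pres_rel.cong pres_rel.trans)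
    show "pres_class S E (u @ v) \<subseteq> (\<Union>a \<in> pres_class S E u. \<Union>b \<in> pres_class S E v. pres_class S E (a @ b))"
      using assms by (blast intro: pres_rel.refl)
  qed
  then show ?thesis
    by (simp add: presented_group_def)
qed

definition inv_word :: "'g word \<Rightarrow> 'g word" where
  "inv_word w = rev (map (\<lambda>(x, b). (x, \<not> b)) w)"

lemma inv_word_in_words: "w \<in> words S \<Longrightarrow> inv_word w \<in> words S"
  by (auto simp: inv_word_def words_def)

lemma inv_word_cancel: "w \<in> words S \<Longrightarrow> (inv_word w @ w, []) \<in> pres_rel S E"
proof (induction w)
  case Nil
  then show ?case
    by (simp add: inv_word_def pres_rel.refl)
next
  case (Cons a w)
  obtain x b where a: "a = (x, b)"
    by force
  have x: "x \<in> S" and w: "w \<in> words S"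
    using Cons.prems a by auto
  have "([(x, \<not> b), (x, b)] @ w, [] @ w) \<in> pres_rel S E"
    using pres_rel.cancel[OF x, of "\<not> b" E, simplified] pres_rel.refl[OF w, of E] by (rule pres_rel.cong)
  then have "(inv_word w @ [(x, \<not> b), (x, b)] @ w, inv_word w @ w) \<in> pres_rel S E"
    using w by (auto intro: pres_rel.cong pres_rel.refl inv_word_in_words)
  then show ?case
    using Cons.IH w by (auto simp: a inv_word_def intro: pres_rel.trans)
qed

lemma group_presented_group: "group (presented_group S E)"
proof (rule groupI)
  fix A B
  assume "A \<in> carrier (presented_group S E)" "B \<in> carrier (presented_group S E)"
  then show "A \<otimes>\<^bsub>presented_group S E\<^esub> B \<in> carrier (presented_group S E)"
    by (auto simp: presented_group_carrier presented_group_mult)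
next
  show "\<one>\<^bsub>presented_group S E\<^esub> \<in> carrier (presented_group S E)"
    by (simp add: presented_group_one pres_class_in_carrier)
next
  fix A B C
  assume "A \<in> carrier (presented_group S E)" "B \<in> carrier (presented_group S E)"
    "C \<in> carrier (presented_group S E)"
  then show "A \<otimes>\<^bsub>presented_group S E\<^esub> B \<otimes>\<^bsub>presented_group S E\<^esub> C =
      A \<otimes>\<^bsub>presented_group S E\<^esub> (B \<otimes>\<^bsub>presented_group S E\<^esub> C)"
    by (auto simp: presented_group_carrier presented_group_mult)
next
  fix A
  assume "A \<in> carrier (presented_group S E)"
  then show "\<one>\<^bsub>presented_group S E\<^esub> \<otimes>\<^bsub>presented_group S E\<^esub> A = A"
    by (auto simp: presented_group_carrier presented_group_mult presented_group_one)
next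
  fix A
  assume "A \<in> carrier (presented_group S E)"
  then obtain w where w: "w \<in> words S" "A = pres_class S E w"
    by (auto simp: presented_group_carrier)
  have "pres_class S E (inv_word w) \<otimes>\<^bsub>presented_group S E\<^esub> A = \<one>\<^bsub>presented_group S E\<^esub>"
    using w inv_word_cancel[OF w(1)]
    by (simp add: presented_group_mult presented_group_one inv_word_in_words pres_class_eq_iff)
  then show "\<exists>B \<in> carrier (presented_group S E). B \<otimes>\<^bsub>presented_group S E\<^esub> A = \<one>\<^bsub>presented_group S E\<^esub>"
    using w(1) by (blast intro: pres_class_in_carrier inv_word_in_words)
qed

fun eval_word :: "('a, 'm) monoid_scheme \<Rightarrow> ('g \<Rightarrow> 'a) \<Rightarrow> 'g word \<Rightarrow> 'a" where
  "eval_word H f [] = \<one>\<^bsub>H\<^esub>"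
| "eval_word H f ((x, b) # w) = (if b then inv\<^bsub>H\<^esub> (f x) else f x) \<otimes>\<^bsub>H\<^esub> eval_word H f w"

lemma eval_word_cong:
  "(\<And>x. x \<in> S \<Longrightarrow> f x = g x) \<Longrightarrow> w \<in> words S \<Longrightarrow> eval_word H f w = eval_word H g w"
  by (induction H f w rule: eval_word.induct) auto

context group
begin

lemma eval_word_in_subgroup:
  assumes "subgroup K G" "f \<in> S \<rightarrow> K" "w \<in> words S"
  shows "eval_word G f w \<in> K"
  using assms(3)
proof (induction w)
  case (Cons a w)
  obtain x b where a: "a = (x, b)"
    by force
  then have "f x \<in> K"
    using Cons.prems assms(2) by auto
  then show ?case
    using Cons a assms(1) by (simp add: subgroup.m_closed subgroup.m_inv_closed)
qed (simp add: subgroup.one_closed[OF assms(1)])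

lemma eval_word_closed: "f \<in> S \<rightarrow> carrier G \<Longrightarrow> w \<in> words S \<Longrightarrow> eval_word G f w \<in> carrier G"
  by (rule eval_word_in_subgroup[OF subgroup_self])

lemma eval_word_append:
  assumes "f \<in> S \<rightarrow> carrier G" "u \<in> words S" "v \<in> words S"
  shows "eval_word G f (u @ v) = eval_word G f u \<otimes> eval_word G f v"
  using assms(2)
proof (induction u)
  case (Cons a u)
  obtain x b where a: "a = (x, b)"
    by force
  then have "f x \<in> carrier G"
    using Cons.prems assms(1) by auto
  then show ?case
    using Cons a assms by (simp add: m_assoc eval_word_closed)
qed (simp add: eval_word_closed[OF assms(1,3)])

lemma eval_word_pres_rel:
  assumes f: "f \<in> S \<rightarrow> carrier G"
    and E: "\<And>u v. (u, v) \<in> E \<Longrightarrow> u \<in> words S \<Longrightarrow> v \<in> words S \<Longrightarrow> eval_word G f u = eval_word G f v"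
  shows "(u, v) \<in> pres_rel S E \<Longrightarrow> eval_word G f u = eval_word G f v"
proof (induction rule: pres_rel.induct)
  case (cancel x b)
  then have "f x \<in> carrier G"
    using f by auto
  then show ?case
    by simp
next
  case (cong u v u' v')
  then show ?case
    using pres_rel_words[OF cong(1)] pres_rel_words[OF cong(2)] by (simp add: eval_word_append[OF f])
qed (use E in auto)

end

lemma (in group_hom) hom_eval_word:
  assumes "f \<in> S \<rightarrow> carrier G" "w \<in> words S"
  shows "h (eval_word G f w) = eval_word H (h \<circ> f) w"
  using assms(2)
proof (induction w)
  case (Cons a w)
  obtain x b where a: "a = (x, b)"
    by force
  then have "f x \<in> carrier G"
    using Cons.prems assms(1) by auto
  then show ?case
    using Cons a assms(1) by (simp add: G.eval_word_closed)
qed simp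

definition pres_lift :: "('a, 'm) monoid_scheme \<Rightarrow> ('g \<Rightarrow> 'a) \<Rightarrow> 'g word set \<Rightarrow> 'a" where
  "pres_lift H f C = the_elem (eval_word H f ` C)"

locale pres_model = group G for G (structure) +
  fixes S :: "'g set" and E :: "('g word \<times> 'g word) set" and f :: "'g \<Rightarrow> 'a"
  assumes gens_closed: "f \<in> S \<rightarrow> carrier G"
    and rels_hold: "\<And>u v. (u, v) \<in> E \<Longrightarrow> u \<in> words S \<Longrightarrow> v \<in> words S \<Longrightarrow> eval_word G f u = eval_word G f v"
begin

lemma pres_lift_class: "w \<in> words S \<Longrightarrow> pres_lift G f (pres_class S E w) = eval_word G f w"
  unfolding pres_lift_def
proof (rule the_elem_image_unique)
  assume "w \<in> words S"
  then show "pres_class S E w \<noteq> {}"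
    by (blast intro: pres_rel.refl)
  show "eval_word G f v = eval_word G f w" if "v \<in> pres_class S E w" for v
  proof -
    from that have "(w, v) \<in> pres_rel S E"
      by simp
    from eval_word_pres_rel[OF gens_closed rels_hold this] show ?thesis
      by simp
  qed
qed

lemma pres_lift_hom: "pres_lift G f \<in> hom (presented_group S E) G"
proof (rule homI)
  fix C
  assume "C \<in> carrier (presented_group S E)"
  then obtain w where "w \<in> words S" "C = pres_class S E w"
    by (auto simp: presented_group_carrier)
  then show "pres_lift G f C \<in> carrier G"
    by (simp add: pres_lift_class eval_word_closed[OF gens_closed])
next
  fix C D
  assume "C \<in> carrier (presented_group S E)" "D \<in> carrier (presented_group S E)"
  then obtain u v where "u \<in> words S" "v \<in> words S" "C = pres_class S E u" "D = pres_class S E v"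
    by (auto simp: presented_group_carrier)
  then show "pres_lift G f (C \<otimes>\<^bsub>presented_group S E\<^esub> D) = pres_lift G f C \<otimes> pres_lift G f D"
    by (simp add: presented_group_mult pres_lift_class eval_word_append[OF gens_closed])
qed

lemma pres_lift_gen:
  assumes "x \<in> S"
  shows "pres_lift G f (pres_gen S E x) = f x"
proof -
  have "f x \<in> carrier G"
    using assms gens_closed by auto
  then show ?thesis
    using assms by (simp add: pres_gen_def pres_lift_class)
qed

end

lemma pres_gen_in_carrier: "x \<in> S \<Longrightarrow> pres_gen S E x \<in> carrier (presented_group S E)"
  unfolding pres_gen_def by (rule pres_class_in_carrier) simp

lemma pres_gen_funcset: "pres_gen S E \<in> S \<rightarrow> carrier (presented_group S E)"
  by (simp add: pres_gen_in_carrier)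

lemma eval_word_pres_gen:
  "w \<in> words S \<Longrightarrow> eval_word (presented_group S E) (pres_gen S E) w = pres_class S E w"
proof (induction w)
  case Nil
  then show ?case
    by (simp add: presented_group_one)
next
  case (Cons a w)
  interpret P: group "presented_group S E"
    by (rule group_presented_group)
  obtain x b where a: "a = (x, b)"
    by force
  have x: "x \<in> S" and w: "w \<in> words S"
    using Cons.prems a by auto
  have letter: "pres_class S E [(x, b)] =
      (if b then inv\<^bsub>presented_group S E\<^esub> (pres_gen S E x) else pres_gen S E x)"
  proof (cases b)
    case True
    have "([(x, True), (x, False)], []) \<in> pres_rel S E"
      using pres_rel.cancel[OF x, of True] by simp
    then have "pres_class S E [(x, True)] \<otimes>\<^bsub>presented_group S E\<^esub> pres_gen S E x = \<one>\<^bsub>presented_group S E\<^esub>"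
      using x by (simp add: pres_gen_def presented_group_mult presented_group_one pres_class_eq_iff)
    then show ?thesis
      using True x by (simp add: P.inv_equality pres_gen_in_carrier pres_class_in_carrier)
  qed (simp add: pres_gen_def)
  show ?case
    using Cons.IH w x by (simp add: a letter[symmetric] presented_group_mult)
qed

lemma pres_gen_relation:
  "(u, v) \<in> E \<Longrightarrow> u \<in> words S \<Longrightarrow> v \<in> words S \<Longrightarrow>
    eval_word (presented_group S E) (pres_gen S E) u = eval_word (presented_group S E) (pres_gen S E) v"
  by (simp add: eval_word_pres_gen pres_class_eq_iff pres_rel.rel)

lemma presented_group_hom_eqI:
  assumes "group H" "h \<in> hom (presented_group S E) H" "h' \<in> hom (presented_group S E) H"
    and gens: "\<And>x. x \<in> S \<Longrightarrow> h (pres_gen S E x) = h' (pres_gen S E x)"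
    and C: "C \<in> carrier (presented_group S E)"
  shows "h C = h' C"
proof -
  interpret h: group_hom "presented_group S E" H h
    using assms(1,2) group_presented_group by (simp add: group_hom_def group_hom_axioms_def)
  interpret h': group_hom "presented_group S E" H h'
    using assms(1,3) group_presented_group by (simp add: group_hom_def group_hom_axioms_def)
  obtain w where w: "w \<in> words S" "C = pres_class S E w"
    using C by (auto simp: presented_group_carrier)
  then have "C = eval_word (presented_group S E) (pres_gen S E) w"
    by (simp add: eval_word_pres_gen)
  then show ?thesis
    using h.hom_eval_word[OF pres_gen_funcset w(1)] h'.hom_eval_word[OF pres_gen_funcset w(1)]
      eval_word_cong[OF _ w(1), of "h \<circ> pres_gen S E" "h' \<circ> pres_gen S E"] gens
    by simp
qed

lemma presented_group_hom_surj:
  assumes "group G" "h \<in> hom G (presented_group S E)"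
    and gens: "\<And>x. x \<in> S \<Longrightarrow> pres_gen S E x \<in> h ` carrier G"
  shows "h ` carrier G = carrier (presented_group S E)"
proof
  show "h ` carrier G \<subseteq> carrier (presented_group S E)"
    using assms(2) by (auto simp: hom_def)
next
  interpret h: group_hom G "presented_group S E" h
    using assms(1,2) group_presented_group by (simp add: group_hom_def group_hom_axioms_def)
  show "carrier (presented_group S E) \<subseteq> h ` carrier G"
  proof
    fix C
    assume "C \<in> carrier (presented_group S E)"
    then obtain w where w: "w \<in> words S" "C = pres_class S E w"
      by (auto simp: presented_group_carrier)
    have "eval_word (presented_group S E) (pres_gen S E) w \<in> h ` carrier G"
      using h.H.eval_word_in_subgroup[OF h.img_is_subgroup _ w(1)] gens by blast
    then show "C \<in> h ` carrier G"
      using w by (simp add: eval_word_pres_gen)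
  qed
qed

section \<open>Commutators, involutions and normal closures\<close>

context group
begin

lemma inv_mult_cancel_left: "u \<in> carrier G \<Longrightarrow> v \<in> carrier G \<Longrightarrow> inv u \<otimes> (u \<otimes> v) = v"
  by (simp add: m_assoc[symmetric])

lemma commutator_eq_one_iff:
  assumes "p \<in> carrier G" "q \<in> carrier G"
  shows "p \<otimes> q \<otimes> inv p \<otimes> inv q = \<one> \<longleftrightarrow> p \<otimes> q = q \<otimes> p"
proof -
  have "p \<otimes> q \<otimes> inv p \<otimes> inv q = \<one> \<longleftrightarrow> p \<otimes> q \<otimes> inv p \<otimes> inv q \<otimes> (q \<otimes> p) = q \<otimes> p"
    using assms by simp
  moreover have "p \<otimes> q \<otimes> inv p \<otimes> inv q \<otimes> (q \<otimes> p) = p \<otimes> q"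
    using assms by (simp add: m_assoc inv_mult_cancel_left)
  ultimately show ?thesis
    by auto
qed

text \<open>For commuting involutions \<open>x\<close>, \<open>y\<close> the product \<open>x \<otimes> y\<close> is an involution, so each of
  the three equations below says that \<open>a\<close> commutes with \<open>x \<otimes> y\<close>.\<close>

lemma conj_involutions_iff:
  assumes x: "x \<in> carrier G" and y: "y \<in> carrier G" and a: "a \<in> carrier G"
    and xx: "x \<otimes> x = \<one>" and yy: "y \<otimes> y = \<one>" and xy: "x \<otimes> y = y \<otimes> x"
  shows "x \<otimes> (y \<otimes> (a \<otimes> (y \<otimes> x))) = a \<longleftrightarrow> a \<otimes> (x \<otimes> y) = y \<otimes> (x \<otimes> a)"
    and "x \<otimes> (y \<otimes> (a \<otimes> (y \<otimes> x))) = a \<longleftrightarrow> x \<otimes> (a \<otimes> y) = y \<otimes> (a \<otimes> x)"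
proof -
  have "x \<otimes> (y \<otimes> (a \<otimes> (y \<otimes> x))) \<otimes> (x \<otimes> y) = x \<otimes> (y \<otimes> (a \<otimes> (y \<otimes> ((x \<otimes> x) \<otimes> y))))"
    using x y a by (simp add: m_assoc)
  also have "\<dots> = y \<otimes> (x \<otimes> a)"
    using x y a by (simp add: xx yy m_assoc[symmetric] xy)
  finally have "x \<otimes> (y \<otimes> (a \<otimes> (y \<otimes> x))) \<otimes> (x \<otimes> y) = y \<otimes> (x \<otimes> a)" .
  moreover have "x \<otimes> (y \<otimes> (a \<otimes> (y \<otimes> x))) = a \<longleftrightarrow>
      x \<otimes> (y \<otimes> (a \<otimes> (y \<otimes> x))) \<otimes> (x \<otimes> y) = a \<otimes> (x \<otimes> y)"
    using x y a by simp
  ultimately show "x \<otimes> (y \<otimes> (a \<otimes> (y \<otimes> x))) = a \<longleftrightarrow> a \<otimes> (x \<otimes> y) = y \<otimes> (x \<otimes> a)"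
    by auto
next
  have "y \<otimes> (x \<otimes> (a \<otimes> y)) \<otimes> x = x \<otimes> (y \<otimes> (a \<otimes> (y \<otimes> x)))"
    using x y a by (simp add: m_assoc[symmetric] xy)
  moreover have "y \<otimes> (y \<otimes> (a \<otimes> x)) \<otimes> x = a"
    using x y a by (simp add: m_assoc[symmetric] yy) (simp add: m_assoc xx)
  moreover have "x \<otimes> (a \<otimes> y) = y \<otimes> (a \<otimes> x) \<longleftrightarrow>
      y \<otimes> (x \<otimes> (a \<otimes> y)) \<otimes> x = y \<otimes> (y \<otimes> (a \<otimes> x)) \<otimes> x"
    using x y a by simp
  ultimately show "x \<otimes> (y \<otimes> (a \<otimes> (y \<otimes> x))) = a \<longleftrightarrow> x \<otimes> (a \<otimes> y) = y \<otimes> (a \<otimes> x)"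
    by auto
qed

lemma normal_closure_normal:
  assumes "Y \<subseteq> carrier G"
  shows "normal_closure G Y \<lhd> G"
  unfolding normal_closure_def
proof (rule normal_generateI)
  show "(\<Union>g \<in> carrier G. (\<lambda>y. g \<otimes> y \<otimes> inv g) ` Y) \<subseteq> carrier G"
    using assms by auto
  fix h g
  assume "h \<in> (\<Union>g \<in> carrier G. (\<lambda>y. g \<otimes> y \<otimes> inv g) ` Y)" and g: "g \<in> carrier G"
  then obtain g' y where g': "g' \<in> carrier G" and y: "y \<in> Y" and h: "h = g' \<otimes> y \<otimes> inv g'"
    by auto
  have "g \<otimes> h \<otimes> inv g = (g \<otimes> g') \<otimes> y \<otimes> inv (g \<otimes> g')"
    using g g' y assms by (auto simp: h inv_mult_group m_assoc)
  then show "g \<otimes> h \<otimes> inv g \<in> (\<Union>g \<in> carrier G. (\<lambda>y. g \<otimes> y \<otimes> inv g) ` Y)"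
    using g g' y by blast
qed

lemma subset_normal_closure:
  assumes "Y \<subseteq> carrier G"
  shows "Y \<subseteq> normal_closure G Y"
proof
  fix y
  assume "y \<in> Y"
  then have "y \<in> (\<lambda>y. \<one> \<otimes> y \<otimes> inv \<one>) ` Y"
    using assms by force
  then show "y \<in> normal_closure G Y"
    unfolding normal_closure_def by (blast intro: generate.incl)
qed

lemma normal_closure_minimal:
  assumes "K \<lhd> G" "Y \<subseteq> K"
  shows "normal_closure G Y \<subseteq> K"
  unfolding normal_closure_def
proof (rule generate_subgroup_incl)
  interpret K: normal K G
    by fact
  show "subgroup K G"
    by (rule K.subgroup_axioms)
  show "(\<Union>g \<in> carrier G. (\<lambda>y. g \<otimes> y \<otimes> inv g) ` Y) \<subseteq> K"
    using assms(2) K.inv_op_closed2 by auto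
qed

end

(* Products in a quotient group are kept abstract: unfolding them to set products
   would block the group-level simp rules. *)
declare mult_FactGroup [simp del] one_FactGroup [simp del]

lemma (in normal) kernel_r_coset: "kernel G (G Mod H) (r_coset G H) = H"
  using coset_join1[OF _ _ subgroup_axioms] coset_join2[OF _ subgroup_axioms]
  by (auto simp: kernel_def one_FactGroup)

lemma (in normal) FactGroup_commute:
  assumes p: "p \<in> carrier G" and q: "q \<in> carrier G" and pq: "p \<otimes> q \<otimes> inv p \<otimes> inv q \<in> H"
  shows "(H #> p) \<otimes>\<^bsub>G Mod H\<^esub> (H #> q) = (H #> q) \<otimes>\<^bsub>G Mod H\<^esub> (H #> p)"
proof -
  interpret Q: group "G Mod H"
    by (rule factorgroup_is_group)
  interpret proj: group_hom G "G Mod H" "r_coset G H"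
    by (simp add: group_hom_def group_hom_axioms_def is_group factorgroup_is_group r_coset_hom_Mod)
  have "H #> (p \<otimes> q \<otimes> inv p \<otimes> inv q) = \<one>\<^bsub>G Mod H\<^esub>"
    using coset_join2[OF _ subgroup_axioms pq] p q by (simp add: one_FactGroup)
  then have "(H #> p) \<otimes>\<^bsub>G Mod H\<^esub> (H #> q) \<otimes>\<^bsub>G Mod H\<^esub> inv\<^bsub>G Mod H\<^esub> (H #> p)
      \<otimes>\<^bsub>G Mod H\<^esub> inv\<^bsub>G Mod H\<^esub> (H #> q) = \<one>\<^bsub>G Mod H\<^esub>"
    using p q by (simp add: proj.hom_mult proj.hom_inv)
  then show ?thesis
    using Q.commutator_eq_one_iff[OF proj.hom_closed[OF p] proj.hom_closed[OF q]] by blast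
qed

lemma in_GN_gens: "i \<in> {1..N} \<Longrightarrow> j \<in> {1..N} \<Longrightarrow> i \<noteq> j \<Longrightarrow> {i, j} \<in> GN_gens N"
  unfolding GN_gens_def by blast

lemma Inl_in_GD_gens: "i \<in> {1..n} \<Longrightarrow> j \<in> {1..n} \<Longrightarrow> i \<noteq> j \<Longrightarrow> Inl {i, j} \<in> GD_gens n"
  unfolding GD_gens_def using in_GN_gens by blast

lemma Inr_in_GD_gens: "i \<in> {1..n} \<Longrightarrow> Inr i \<in> GD_gens n"
  unfolding GD_gens_def by blast

lemma GN_rels_words: "(u, v) \<in> GN_rels N \<Longrightarrow> u \<in> words (GN_gens N) \<and> v \<in> words (GN_gens N)"
  unfolding GN_rels_def by (auto simp: in_GN_gens)

lemma GD_rels_words: "(u, v) \<in> GD_rels n \<Longrightarrow> u \<in> words (GD_gens n) \<and> v \<in> words (GD_gens n)"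
  unfolding GD_rels_def by (auto simp: Inl_in_GD_gens Inr_in_GD_gens)

lemma group_G2: "group (G2 N)"
  unfolding G2_def by (rule group_presented_group)

lemma group_G2D: "group (G2D n)"
  unfolding G2D_def by (rule group_presented_group)

interpretation G2: group "G2 N" for N
  by (rule group_G2)

interpretation G2D: group "G2D n" for n
  by (rule group_G2D)

definition aG :: "nat \<Rightarrow> nat set \<Rightarrow> nat set word set" where
  "aG N Z = pres_gen (GN_gens N) (GN_rels N) Z"

definition aD :: "nat \<Rightarrow> nat set \<Rightarrow> (nat set + nat) word set" where
  "aD n Z = pres_gen (GD_gens n) (GD_rels n) (Inl Z)"

definition tauD :: "nat \<Rightarrow> nat \<Rightarrow> (nat set + nat) word set" where
  "tauD n i = pres_gen (GD_gens n) (GD_rels n) (Inr i)"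

lemma a_G2_eq_aG: "a_G2 N i j = aG N {i, j}"
  by (simp add: a_G2_def aG_def)

lemma aG_in_carrier: "i \<in> {1..N} \<Longrightarrow> j \<in> {1..N} \<Longrightarrow> i \<noteq> j \<Longrightarrow> aG N {i, j} \<in> carrier (G2 N)"
  unfolding aG_def G2_def by (rule pres_gen_in_carrier) (rule in_GN_gens)

lemma aD_in_carrier: "i \<in> {1..n} \<Longrightarrow> j \<in> {1..n} \<Longrightarrow> i \<noteq> j \<Longrightarrow> aD n {i, j} \<in> carrier (G2D n)"
  unfolding aD_def G2D_def by (rule pres_gen_in_carrier) (rule Inl_in_GD_gens)

lemma tauD_in_carrier: "i \<in> {1..n} \<Longrightarrow> tauD n i \<in> carrier (G2D n)"
  unfolding tauD_def G2D_def by (rule pres_gen_in_carrier) (rule Inr_in_GD_gens)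

lemma G2_relation: "(u, v) \<in> GN_rels N \<Longrightarrow> eval_word (G2 N) (aG N) u = eval_word (G2 N) (aG N) v"
  using pres_gen_relation[of u v "GN_rels N" "GN_gens N"] GN_rels_words[of u v N]
  by (simp add: G2_def aG_def[abs_def])

lemma G2D_relation:
  "(u, v) \<in> GD_rels n \<Longrightarrow>
    eval_word (G2D n) (case_sum (aD n) (tauD n)) u = eval_word (G2D n) (case_sum (aD n) (tauD n)) v"
proof -
  have "pres_gen (GD_gens n) (GD_rels n) = case_sum (aD n) (tauD n)"
    by (rule ext) (simp add: aD_def tauD_def split: sum.split)
  then show "(u, v) \<in> GD_rels n \<Longrightarrow> ?thesis"
    using pres_gen_relation[of u v "GD_rels n" "GD_gens n"] GD_rels_words[of u v n]
    by (simp add: G2D_def)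
qed

lemma aG_square:
  assumes "i \<in> {1..N}" "j \<in> {1..N}" "i \<noteq> j"
  shows "aG N {i, j} \<otimes>\<^bsub>G2 N\<^esub> aG N {i, j} = \<one>\<^bsub>G2 N\<^esub>"
proof -
  have "(g1 {i, j} @ g1 {i, j}, []) \<in> GN_rels N"
    unfolding GN_rels_def using assms by blast
  from G2_relation[OF this] show ?thesis
    using assms by (simp add: aG_in_carrier)
qed

lemma aG_commute:
  assumes "i \<in> {1..N}" "j \<in> {1..N}" "k \<in> {1..N}" "l \<in> {1..N}" "distinct [i, j, k, l]"
  shows "aG N {i, j} \<otimes>\<^bsub>G2 N\<^esub> aG N {k, l} = aG N {k, l} \<otimes>\<^bsub>G2 N\<^esub> aG N {i, j}"
proof -
  have "(g1 {i, j} @ g1 {k, l}, g1 {k, l} @ g1 {i, j}) \<in> GN_rels N"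
    unfolding GN_rels_def using assms by blast
  from G2_relation[OF this] show ?thesis
    using assms by (simp add: aG_in_carrier)
qed

lemma aG_triangle:
  assumes "i \<in> {1..N}" "j \<in> {1..N}" "k \<in> {1..N}" "distinct [i, j, k]"
  shows "aG N {i, j} \<otimes>\<^bsub>G2 N\<^esub> (aG N {i, k} \<otimes>\<^bsub>G2 N\<^esub> aG N {j, k}) =
    aG N {j, k} \<otimes>\<^bsub>G2 N\<^esub> (aG N {i, k} \<otimes>\<^bsub>G2 N\<^esub> aG N {i, j})"
proof -
  have "(g1 {i, j} @ g1 {i, k} @ g1 {j, k}, g1 {j, k} @ g1 {i, k} @ g1 {i, j}) \<in> GN_rels N"
    unfolding GN_rels_def using assms by blast
  from G2_relation[OF this] show ?thesis
    using assms by (simp add: aG_in_carrier)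
qed

lemma aD_square:
  assumes "i \<in> {1..n}" "j \<in> {1..n}" "i \<noteq> j"
  shows "aD n {i, j} \<otimes>\<^bsub>G2D n\<^esub> aD n {i, j} = \<one>\<^bsub>G2D n\<^esub>"
proof -
  have "(g1 (Inl {i, j}) @ g1 (Inl {i, j}), []) \<in> GD_rels n"
    unfolding GD_rels_def using assms by blast
  from G2D_relation[OF this] show ?thesis
    using assms by (simp add: aD_in_carrier)
qed

lemma aD_commute:
  assumes "i \<in> {1..n}" "j \<in> {1..n}" "k \<in> {1..n}" "l \<in> {1..n}" "distinct [i, j, k, l]"
  shows "aD n {i, j} \<otimes>\<^bsub>G2D n\<^esub> aD n {k, l} = aD n {k, l} \<otimes>\<^bsub>G2D n\<^esub> aD n {i, j}"
proof -
  have "(g1 (Inl {i, j}) @ g1 (Inl {k, l}), g1 (Inl {k, l}) @ g1 (Inl {i, j})) \<in> GD_rels n"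
    unfolding GD_rels_def using assms by blast
  from G2D_relation[OF this] show ?thesis
    using assms by (simp add: aD_in_carrier)
qed

lemma aD_triangle:
  assumes "i \<in> {1..n}" "j \<in> {1..n}" "k \<in> {1..n}" "distinct [i, j, k]"
  shows "aD n {i, j} \<otimes>\<^bsub>G2D n\<^esub> (aD n {i, k} \<otimes>\<^bsub>G2D n\<^esub> aD n {j, k}) =
    aD n {j, k} \<otimes>\<^bsub>G2D n\<^esub> (aD n {i, k} \<otimes>\<^bsub>G2D n\<^esub> aD n {i, j})"
proof -
  have "(g1 (Inl {i, j}) @ g1 (Inl {i, k}) @ g1 (Inl {j, k}),
      g1 (Inl {j, k}) @ g1 (Inl {i, k}) @ g1 (Inl {i, j})) \<in> GD_rels n"
    unfolding GD_rels_def using assms by blast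
  from G2D_relation[OF this] show ?thesis
    using assms by (simp add: aD_in_carrier)
qed

lemma tauD_square:
  assumes "i \<in> {1..n}"
  shows "tauD n i \<otimes>\<^bsub>G2D n\<^esub> tauD n i = \<one>\<^bsub>G2D n\<^esub>"
proof -
  have "(g1 (Inr i) @ g1 (Inr i), []) \<in> GD_rels n"
    unfolding GD_rels_def using assms by blast
  from G2D_relation[OF this] show ?thesis
    using assms by (simp add: tauD_in_carrier)
qed

lemma tauD_commute:
  assumes "i \<in> {1..n}" "j \<in> {1..n}"
  shows "tauD n i \<otimes>\<^bsub>G2D n\<^esub> tauD n j = tauD n j \<otimes>\<^bsub>G2D n\<^esub> tauD n i"
proof -
  have "(g1 (Inr i) @ g1 (Inr j), g1 (Inr j) @ g1 (Inr i)) \<in> GD_rels n"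
    unfolding GD_rels_def using assms by blast
  from G2D_relation[OF this] show ?thesis
    using assms by (simp add: tauD_in_carrier)
qed

lemma tauD_conj_aD:
  assumes "i \<in> {1..n}" "j \<in> {1..n}" "i \<noteq> j"
  shows "tauD n i \<otimes>\<^bsub>G2D n\<^esub> (tauD n j \<otimes>\<^bsub>G2D n\<^esub> (aD n {i, j} \<otimes>\<^bsub>G2D n\<^esub> (tauD n j \<otimes>\<^bsub>G2D n\<^esub> tauD n i))) =
    aD n {i, j}"
proof -
  have "(g1 (Inr i) @ g1 (Inr j) @ g1 (Inl {i, j}) @ g1 (Inr j) @ g1 (Inr i), g1 (Inl {i, j})) \<in> GD_rels n"
    unfolding GD_rels_def using assms by blast
  from G2D_relation[OF this] show ?thesis
    using assms by (simp add: aD_in_carrier tauD_in_carrier)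
qed

lemma aD_tauD_commute:
  assumes "i \<in> {1..n}" "j \<in> {1..n}" "k \<in> {1..n}" "distinct [i, j, k]"
  shows "aD n {i, j} \<otimes>\<^bsub>G2D n\<^esub> tauD n k = tauD n k \<otimes>\<^bsub>G2D n\<^esub> aD n {i, j}"
proof -
  have "(g1 (Inl {i, j}) @ g1 (Inr k), g1 (Inr k) @ g1 (Inl {i, j})) \<in> GD_rels n"
    unfolding GD_rels_def using assms by blast
  from G2D_relation[OF this] show ?thesis
    using assms by (simp add: aD_in_carrier tauD_in_carrier)
qed

section \<open>The epimorphism from G2 (n+1) onto G2D n\<close>

definition phi_gen :: "nat \<Rightarrow> nat set \<Rightarrow> (nat set + nat) word set" where
  "phi_gen n Z = (if Suc n \<in> Z then tauD n (Min Z) else aD n Z)"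

lemma phi_gen_eq:
  assumes "i \<in> {1..Suc n}" "j \<in> {1..Suc n}" "i \<noteq> j"
  shows "phi_gen n {i, j} =
    (if i = Suc n then tauD n j else if j = Suc n then tauD n i else aD n {i, j})"
  using assms by (auto simp: phi_gen_def min_def)

lemma phi_gen_in_carrier:
  "i \<in> {1..Suc n} \<Longrightarrow> j \<in> {1..Suc n} \<Longrightarrow> i \<noteq> j \<Longrightarrow> phi_gen n {i, j} \<in> carrier (G2D n)"
  by (auto simp: phi_gen_eq intro!: tauD_in_carrier aD_in_carrier)

lemma phi_gen_funcset: "phi_gen n \<in> GN_gens (Suc n) \<rightarrow> carrier (G2D n)"
  unfolding GN_gens_def using phi_gen_in_carrier by blast

lemma phi_gen_square:
  assumes "i \<in> {1..Suc n}" "j \<in> {1..Suc n}" "i \<noteq> j"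
  shows "phi_gen n {i, j} \<otimes>\<^bsub>G2D n\<^esub> phi_gen n {i, j} = \<one>\<^bsub>G2D n\<^esub>"
  using assms by (auto simp: phi_gen_eq tauD_square aD_square)

lemma phi_gen_commute:
  assumes "i \<in> {1..Suc n}" "j \<in> {1..Suc n}" "k \<in> {1..Suc n}" "l \<in> {1..Suc n}" "distinct [i, j, k, l]"
  shows "phi_gen n {i, j} \<otimes>\<^bsub>G2D n\<^esub> phi_gen n {k, l} = phi_gen n {k, l} \<otimes>\<^bsub>G2D n\<^esub> phi_gen n {i, j}"
proof -
  consider "i = Suc n" | "j = Suc n" | "k = Suc n" | "l = Suc n"
    | "i \<noteq> Suc n" "j \<noteq> Suc n" "k \<noteq> Suc n" "l \<noteq> Suc n"
    by blast
  then show ?thesis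
  proof cases
    case 1
    then show ?thesis
      using assms aD_tauD_commute[of k n l j] by (simp add: phi_gen_eq)
  next
    case 2
    then show ?thesis
      using assms aD_tauD_commute[of k n l i] by (simp add: phi_gen_eq)
  next
    case 3
    then show ?thesis
      using assms aD_tauD_commute[of i n j l] by (simp add: phi_gen_eq)
  next
    case 4
    then show ?thesis
      using assms aD_tauD_commute[of i n j k] by (simp add: phi_gen_eq)
  next
    case 5
    then have "i \<in> {1..n}" "j \<in> {1..n}" "k \<in> {1..n}" "l \<in> {1..n}"
      using assms by (auto simp: le_Suc_eq)
    then show ?thesis
      using assms 5 aD_commute[of i n j k l] by (simp add: phi_gen_eq)
  qed
qed

lemma phi_gen_triangle:
  assumes "i \<in> {1..Suc n}" "j \<in> {1..Suc n}" "k \<in> {1..Suc n}" "distinct [i, j, k]"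
  shows "phi_gen n {i, j} \<otimes>\<^bsub>G2D n\<^esub> (phi_gen n {i, k} \<otimes>\<^bsub>G2D n\<^esub> phi_gen n {j, k}) =
    phi_gen n {j, k} \<otimes>\<^bsub>G2D n\<^esub> (phi_gen n {i, k} \<otimes>\<^bsub>G2D n\<^esub> phi_gen n {i, j})"
proof -
  have commutes: "aD n {x, y} \<otimes>\<^bsub>G2D n\<^esub> (tauD n x \<otimes>\<^bsub>G2D n\<^esub> tauD n y) =
        tauD n y \<otimes>\<^bsub>G2D n\<^esub> (tauD n x \<otimes>\<^bsub>G2D n\<^esub> aD n {x, y})
      \<and> tauD n x \<otimes>\<^bsub>G2D n\<^esub> (aD n {x, y} \<otimes>\<^bsub>G2D n\<^esub> tauD n y) =
        tauD n y \<otimes>\<^bsub>G2D n\<^esub> (aD n {x, y} \<otimes>\<^bsub>G2D n\<^esub> tauD n x)"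
    if "x \<in> {1..n}" "y \<in> {1..n}" "x \<noteq> y" for x y
    using G2D.conj_involutions_iff[of "tauD n x" n "tauD n y" "aD n {x, y}"] tauD_conj_aD[OF that] that
    by (simp add: tauD_in_carrier aD_in_carrier tauD_square tauD_commute)
  consider "i = Suc n" | "j = Suc n" | "k = Suc n" | "i \<noteq> Suc n" "j \<noteq> Suc n" "k \<noteq> Suc n"
    by blast
  then show ?thesis
  proof cases
    case 1
    then show ?thesis
      using assms commutes[of k j] by (simp add: phi_gen_eq insert_commute)
  next
    case 2
    then show ?thesis
      using assms commutes[of i k] by (simp add: phi_gen_eq)
  next
    case 3
    then show ?thesis
      using assms commutes[of i j] by (simp add: phi_gen_eq)
  next
    case 4
    then show ?thesis
      using assms aD_triangle[of i n j k] by (simp add: phi_gen_eq)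
  qed
qed

lemma phi_gen_relations:
  assumes "(u, v) \<in> GN_rels (Suc n)"
  shows "eval_word (G2D n) (phi_gen n) u = eval_word (G2D n) (phi_gen n) v"
proof -
  from assms consider
      (square) i j where "u = g1 {i, j} @ g1 {i, j}" "v = []"
        "i \<in> {1..Suc n}" "j \<in> {1..Suc n}" "i \<noteq> j"
    | (commute) i j k l where "u = g1 {i, j} @ g1 {k, l}" "v = g1 {k, l} @ g1 {i, j}"
        "i \<in> {1..Suc n}" "j \<in> {1..Suc n}" "k \<in> {1..Suc n}" "l \<in> {1..Suc n}" "distinct [i, j, k, l]"
    | (triangle) i j k where "u = g1 {i, j} @ g1 {i, k} @ g1 {j, k}" "v = g1 {j, k} @ g1 {i, k} @ g1 {i, j}"
        "i \<in> {1..Suc n}" "j \<in> {1..Suc n}" "k \<in> {1..Suc n}" "distinct [i, j, k]"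
    unfolding GN_rels_def by blast
  then show ?thesis
  proof cases
    case square
    then show ?thesis
      by (simp add: phi_gen_in_carrier phi_gen_square)
  next
    case commute
    then show ?thesis
      by (simp add: phi_gen_in_carrier phi_gen_commute)
  next
    case triangle
    then show ?thesis
      using phi_gen_triangle[of i n j k] by (simp add: phi_gen_in_carrier)
  qed
qed

interpretation phi_model: pres_model "G2D n" "GN_gens (Suc n)" "GN_rels (Suc n)" "phi_gen n" for n
  by (rule pres_model.intro[OF group_G2D]) (unfold_locales, rule phi_gen_funcset, rule phi_gen_relations)

definition phi :: "nat \<Rightarrow> nat set word set \<Rightarrow> (nat set + nat) word set" where
  "phi n = pres_lift (G2D n) (phi_gen n)"

lemma phi_hom: "phi n \<in> hom (G2 (Suc n)) (G2D n)"
  unfolding phi_def G2_def by (rule phi_model.pres_lift_hom)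

interpretation phi: group_hom "G2 (Suc n)" "G2D n" "phi n" for n
  by (simp add: group_hom_def group_hom_axioms_def G2.is_group G2D.is_group phi_hom)

lemma phi_aG: "Z \<in> GN_gens (Suc n) \<Longrightarrow> phi n (aG (Suc n) Z) = phi_gen n Z"
  unfolding phi_def aG_def by (rule phi_model.pres_lift_gen)

lemma phi_surj: "phi n ` carrier (G2 (Suc n)) = carrier (G2D n)"
  unfolding G2D_def
proof (rule presented_group_hom_surj[OF group_G2 phi_hom[unfolded G2D_def]])
  fix y
  assume "y \<in> GD_gens n"
  then consider (a) i j where "y = Inl {i, j}" "i \<in> {1..n}" "j \<in> {1..n}" "i \<noteq> j"
    | (tau) i where "y = Inr i" "i \<in> {1..n}"
    unfolding GD_gens_def GN_gens_def by blast
  then show "pres_gen (GD_gens n) (GD_rels n) y \<in> phi n ` carrier (G2 (Suc n))"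
  proof cases
    case a
    then have "phi n (aG (Suc n) {i, j}) = aD n {i, j}"
      by (simp add: phi_aG in_GN_gens phi_gen_eq)
    then show ?thesis
      using a aG_in_carrier[of i "Suc n" j] by (force simp: aD_def)
  next
    case tau
    then have "phi n (aG (Suc n) {i, Suc n}) = tauD n i"
      by (simp add: phi_aG in_GN_gens phi_gen_eq)
    then show ?thesis
      using tau aG_in_carrier[of i "Suc n" "Suc n"] by (force simp: tauD_def)
  qed
qed

section \<open>The quotient of G2 (n+1) and the map back from G2D n\<close>

definition last_commutators :: "nat \<Rightarrow> nat set word set set" where
  "last_commutators n =
    {a_G2 (Suc n) i (Suc n) \<otimes>\<^bsub>G2 (Suc n)\<^esub> a_G2 (Suc n) j (Suc n)
       \<otimes>\<^bsub>G2 (Suc n)\<^esub> inv\<^bsub>G2 (Suc n)\<^esub> (a_G2 (Suc n) i (Suc n))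
       \<otimes>\<^bsub>G2 (Suc n)\<^esub> inv\<^bsub>G2 (Suc n)\<^esub> (a_G2 (Suc n) j (Suc n))
     | i j. i \<in> {1..n} \<and> j \<in> {1..n}}"

definition Ncomm :: "nat \<Rightarrow> nat set word set set" where
  "Ncomm n = normal_closure (G2 (Suc n)) (last_commutators n)"

lemma last_commutators_subset: "last_commutators n \<subseteq> carrier (G2 (Suc n))"
proof -
  have "aG (Suc n) {i, Suc n} \<in> carrier (G2 (Suc n))" if "i \<in> {1..n}" for i
    using that by (intro aG_in_carrier) auto
  then show ?thesis
    unfolding last_commutators_def a_G2_eq_aG by blast
qed

lemma last_commutators_subset_Ncomm: "last_commutators n \<subseteq> Ncomm n"
  unfolding Ncomm_def by (rule G2.subset_normal_closure[OF last_commutators_subset])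

lemma Ncomm_normal: "Ncomm n \<lhd> G2 (Suc n)"
  unfolding Ncomm_def by (rule G2.normal_closure_normal[OF last_commutators_subset])

interpretation Ncomm: normal "Ncomm n" "G2 (Suc n)" for n
  by (rule Ncomm_normal)

abbreviation G2Q :: "nat \<Rightarrow> nat set word set set monoid" where
  "G2Q n \<equiv> G2 (Suc n) Mod Ncomm n"

interpretation G2Q: group "G2Q n" for n
  by (rule Ncomm.factorgroup_is_group)

interpretation proj: group_hom "G2 (Suc n)" "G2Q n" "r_coset (G2 (Suc n)) (Ncomm n)" for n
  by (simp add: group_hom_def group_hom_axioms_def G2.is_group G2Q.is_group Ncomm.r_coset_hom_Mod)

definition aQ :: "nat \<Rightarrow> nat set \<Rightarrow> nat set word set set" where
  "aQ n Z = r_coset (G2 (Suc n)) (Ncomm n) (aG (Suc n) Z)"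

lemma aQ_in_carrier: "i \<in> {1..Suc n} \<Longrightarrow> j \<in> {1..Suc n} \<Longrightarrow> i \<noteq> j \<Longrightarrow> aQ n {i, j} \<in> carrier (G2Q n)"
  unfolding aQ_def by (rule proj.hom_closed[OF aG_in_carrier])

lemma aQ_square:
  assumes "i \<in> {1..Suc n}" "j \<in> {1..Suc n}" "i \<noteq> j"
  shows "aQ n {i, j} \<otimes>\<^bsub>G2Q n\<^esub> aQ n {i, j} = \<one>\<^bsub>G2Q n\<^esub>"
  unfolding aQ_def using assms
  by (simp add: aG_in_carrier aG_square flip: proj.hom_mult)

lemma aQ_commute:
  assumes "i \<in> {1..Suc n}" "j \<in> {1..Suc n}" "k \<in> {1..Suc n}" "l \<in> {1..Suc n}" "distinct [i, j, k, l]"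
  shows "aQ n {i, j} \<otimes>\<^bsub>G2Q n\<^esub> aQ n {k, l} = aQ n {k, l} \<otimes>\<^bsub>G2Q n\<^esub> aQ n {i, j}"
  unfolding aQ_def using assms
  by (simp add: aG_in_carrier aG_commute[OF assms] flip: proj.hom_mult)

lemma aQ_triangle:
  assumes "i \<in> {1..Suc n}" "j \<in> {1..Suc n}" "k \<in> {1..Suc n}" "distinct [i, j, k]"
  shows "aQ n {i, j} \<otimes>\<^bsub>G2Q n\<^esub> (aQ n {i, k} \<otimes>\<^bsub>G2Q n\<^esub> aQ n {j, k}) =
    aQ n {j, k} \<otimes>\<^bsub>G2Q n\<^esub> (aQ n {i, k} \<otimes>\<^bsub>G2Q n\<^esub> aQ n {i, j})"
  unfolding aQ_def using assms
  by (simp add: aG_in_carrier aG_triangle[OF assms] flip: proj.hom_mult)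

lemma aQ_last_commute:
  assumes "i \<in> {1..n}" "j \<in> {1..n}"
  shows "aQ n {i, Suc n} \<otimes>\<^bsub>G2Q n\<^esub> aQ n {j, Suc n} = aQ n {j, Suc n} \<otimes>\<^bsub>G2Q n\<^esub> aQ n {i, Suc n}"
proof -
  have "aG (Suc n) {i, Suc n} \<otimes>\<^bsub>G2 (Suc n)\<^esub> aG (Suc n) {j, Suc n}
      \<otimes>\<^bsub>G2 (Suc n)\<^esub> inv\<^bsub>G2 (Suc n)\<^esub> (aG (Suc n) {i, Suc n})
      \<otimes>\<^bsub>G2 (Suc n)\<^esub> inv\<^bsub>G2 (Suc n)\<^esub> (aG (Suc n) {j, Suc n}) \<in> Ncomm n"
    using assms last_commutators_subset_Ncomm unfolding last_commutators_def a_G2_eq_aG by blast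
  then show ?thesis
    unfolding aQ_def using assms by (intro Ncomm.FactGroup_commute aG_in_carrier) auto
qed

lemma aQ_conj:
  assumes "i \<in> {1..n}" "j \<in> {1..n}" "i \<noteq> j"
  shows "aQ n {i, Suc n} \<otimes>\<^bsub>G2Q n\<^esub> (aQ n {j, Suc n} \<otimes>\<^bsub>G2Q n\<^esub>
      (aQ n {i, j} \<otimes>\<^bsub>G2Q n\<^esub> (aQ n {j, Suc n} \<otimes>\<^bsub>G2Q n\<^esub> aQ n {i, Suc n}))) = aQ n {i, j}"
proof -
  have "aQ n {i, j} \<otimes>\<^bsub>G2Q n\<^esub> (aQ n {i, Suc n} \<otimes>\<^bsub>G2Q n\<^esub> aQ n {j, Suc n}) =
      aQ n {j, Suc n} \<otimes>\<^bsub>G2Q n\<^esub> (aQ n {i, Suc n} \<otimes>\<^bsub>G2Q n\<^esub> aQ n {i, j})"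
    using aQ_triangle[of i n j "Suc n"] assms by simp
  then show ?thesis
    by (rule G2Q.conj_involutions_iff(1)[THEN iffD2, rotated -1])
      (use assms in \<open>simp_all add: aQ_in_carrier aQ_square aQ_last_commute\<close>)
qed

definition psi_gen :: "nat \<Rightarrow> nat set + nat \<Rightarrow> nat set word set set" where
  "psi_gen n y = (case y of Inl Z \<Rightarrow> aQ n Z | Inr i \<Rightarrow> aQ n {i, Suc n})"

lemma psi_gen_funcset: "psi_gen n \<in> GD_gens n \<rightarrow> carrier (G2Q n)"
  unfolding GD_gens_def GN_gens_def psi_gen_def by (auto intro!: aQ_in_carrier)

lemma psi_gen_relations:
  assumes "(u, v) \<in> GD_rels n"
  shows "eval_word (G2Q n) (psi_gen n) u = eval_word (G2Q n) (psi_gen n) v"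
proof -
  from assms consider
      (a_square) i j where "u = g1 (Inl {i, j}) @ g1 (Inl {i, j})" "v = []"
        "i \<in> {1..n}" "j \<in> {1..n}" "i \<noteq> j"
    | (a_commute) i j k l where "u = g1 (Inl {i, j}) @ g1 (Inl {k, l})" "v = g1 (Inl {k, l}) @ g1 (Inl {i, j})"
        "i \<in> {1..n}" "j \<in> {1..n}" "k \<in> {1..n}" "l \<in> {1..n}" "distinct [i, j, k, l]"
    | (a_triangle) i j k where "u = g1 (Inl {i, j}) @ g1 (Inl {i, k}) @ g1 (Inl {j, k})"
        "v = g1 (Inl {j, k}) @ g1 (Inl {i, k}) @ g1 (Inl {i, j})"
        "i \<in> {1..n}" "j \<in> {1..n}" "k \<in> {1..n}" "distinct [i, j, k]"
    | (tau_square) i where "u = g1 (Inr i) @ g1 (Inr i)" "v = []" "i \<in> {1..n}"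
    | (tau_commute) i j where "u = g1 (Inr i) @ g1 (Inr j)" "v = g1 (Inr j) @ g1 (Inr i)"
        "i \<in> {1..n}" "j \<in> {1..n}"
    | (tau_conj) i j where "u = g1 (Inr i) @ g1 (Inr j) @ g1 (Inl {i, j}) @ g1 (Inr j) @ g1 (Inr i)"
        "v = g1 (Inl {i, j})" "i \<in> {1..n}" "j \<in> {1..n}" "i \<noteq> j"
    | (a_tau_commute) i j k where "u = g1 (Inl {i, j}) @ g1 (Inr k)" "v = g1 (Inr k) @ g1 (Inl {i, j})"
        "i \<in> {1..n}" "j \<in> {1..n}" "k \<in> {1..n}" "distinct [i, j, k]"
    unfolding GD_rels_def by blast
  then show ?thesis
  proof cases
    case a_square
    then show ?thesis
      by (simp add: psi_gen_def aQ_in_carrier aQ_square)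
  next
    case a_commute
    then show ?thesis
      using aQ_commute[of i n j k l] by (simp add: psi_gen_def aQ_in_carrier)
  next
    case a_triangle
    then show ?thesis
      using aQ_triangle[of i n j k] by (simp add: psi_gen_def aQ_in_carrier)
  next
    case tau_square
    then show ?thesis
      by (simp add: psi_gen_def aQ_in_carrier aQ_square)
  next
    case tau_commute
    then show ?thesis
      using aQ_last_commute[of i n j] by (simp add: psi_gen_def aQ_in_carrier)
  next
    case tau_conj
    then show ?thesis
      using aQ_conj[of i n j] by (simp add: psi_gen_def aQ_in_carrier)
  next
    case a_tau_commute
    then show ?thesis
      using aQ_commute[of i n j k "Suc n"] by (simp add: psi_gen_def aQ_in_carrier)
  qed
qed

interpretation psi_model: pres_model "G2Q n" "GD_gens n" "GD_rels n" "psi_gen n" for n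
  by (rule pres_model.intro[OF G2Q.is_group]) (unfold_locales, rule psi_gen_funcset, rule psi_gen_relations)

definition psi :: "nat \<Rightarrow> (nat set + nat) word set \<Rightarrow> nat set word set set" where
  "psi n = pres_lift (G2Q n) (psi_gen n)"

lemma psi_hom: "psi n \<in> hom (G2D n) (G2Q n)"
  unfolding psi_def G2D_def by (rule psi_model.pres_lift_hom)

section \<open>The kernel of phi\<close>

lemma psi_aD: "i \<in> {1..n} \<Longrightarrow> j \<in> {1..n} \<Longrightarrow> i \<noteq> j \<Longrightarrow> psi n (aD n {i, j}) = aQ n {i, j}"
  unfolding psi_def aD_def by (simp add: psi_model.pres_lift_gen Inl_in_GD_gens psi_gen_def)

lemma psi_tauD: "i \<in> {1..n} \<Longrightarrow> psi n (tauD n i) = aQ n {i, Suc n}"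
  unfolding psi_def tauD_def by (simp add: psi_model.pres_lift_gen Inr_in_GD_gens psi_gen_def)

lemma psi_phi_gen:
  assumes "i \<in> {1..Suc n}" "j \<in> {1..Suc n}" "i \<noteq> j"
  shows "psi n (phi_gen n {i, j}) = aQ n {i, j}"
proof -
  consider "i = Suc n" | "j = Suc n" | "i \<in> {1..n}" "j \<in> {1..n}"
    using assms by (auto simp: le_Suc_eq)
  then show ?thesis
    by cases (use assms in \<open>simp_all add: phi_gen_eq psi_aD psi_tauD insert_commute\<close>)
qed

lemma psi_phi:
  assumes "x \<in> carrier (G2 (Suc n))"
  shows "psi n (phi n x) = r_coset (G2 (Suc n)) (Ncomm n) x"
proof -
  have "(psi n \<circ> phi n) x = r_coset (G2 (Suc n)) (Ncomm n) x"
  proof (rule presented_group_hom_eqI[OF G2Q.is_group])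
    show "psi n \<circ> phi n \<in> hom (presented_group (GN_gens (Suc n)) (GN_rels (Suc n))) (G2Q n)"
      using hom_compose[OF phi_hom psi_hom] by (simp add: G2_def)
    show "r_coset (G2 (Suc n)) (Ncomm n) \<in> hom (presented_group (GN_gens (Suc n)) (GN_rels (Suc n))) (G2Q n)"
      using Ncomm.r_coset_hom_Mod by (simp add: G2_def)
    show "x \<in> carrier (presented_group (GN_gens (Suc n)) (GN_rels (Suc n)))"
      using assms by (simp add: G2_def)
    fix Z
    assume Z: "Z \<in> GN_gens (Suc n)"
    then obtain i j where "Z = {i, j}" "i \<in> {1..Suc n}" "j \<in> {1..Suc n}" "i \<noteq> j"
      unfolding GN_gens_def by blast
    then have "psi n (phi n (aG (Suc n) Z)) = aQ n Z"
      using Z by (simp add: phi_aG psi_phi_gen)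
    then show "(psi n \<circ> phi n) (pres_gen (GN_gens (Suc n)) (GN_rels (Suc n)) Z) =
        r_coset (G2 (Suc n)) (Ncomm n) (pres_gen (GN_gens (Suc n)) (GN_rels (Suc n)) Z)"
      by (simp add: aQ_def aG_def)
  qed
  then show ?thesis
    by simp
qed

lemma Ncomm_subset_kernel_phi: "Ncomm n \<subseteq> kernel (G2 (Suc n)) (G2D n) (phi n)"
  unfolding Ncomm_def
proof (rule G2.normal_closure_minimal[OF phi.normal_kernel])
  show "last_commutators n \<subseteq> kernel (G2 (Suc n)) (G2D n) (phi n)"
  proof
    fix c
    assume "c \<in> last_commutators n"
    then obtain i j where ij: "i \<in> {1..n}" "j \<in> {1..n}"
      and c: "c = aG (Suc n) {i, Suc n} \<otimes>\<^bsub>G2 (Suc n)\<^esub> aG (Suc n) {j, Suc n}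
        \<otimes>\<^bsub>G2 (Suc n)\<^esub> inv\<^bsub>G2 (Suc n)\<^esub> (aG (Suc n) {i, Suc n})
        \<otimes>\<^bsub>G2 (Suc n)\<^esub> inv\<^bsub>G2 (Suc n)\<^esub> (aG (Suc n) {j, Suc n})"
      unfolding last_commutators_def a_G2_eq_aG by blast
    have "phi n (aG (Suc n) {x, Suc n}) = tauD n x" if "x \<in> {1..n}" for x
      using that by (simp add: phi_aG in_GN_gens phi_gen_eq)
    then have "phi n c = tauD n i \<otimes>\<^bsub>G2D n\<^esub> tauD n j
        \<otimes>\<^bsub>G2D n\<^esub> inv\<^bsub>G2D n\<^esub> (tauD n i) \<otimes>\<^bsub>G2D n\<^esub> inv\<^bsub>G2D n\<^esub> (tauD n j)"
      using ij by (simp add: c aG_in_carrier)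
    also have "\<dots> = \<one>\<^bsub>G2D n\<^esub>"
      using ij by (simp add: G2D.commutator_eq_one_iff tauD_in_carrier tauD_commute)
    finally show "c \<in> kernel (G2 (Suc n)) (G2D n) (phi n)"
      using \<open>c \<in> last_commutators n\<close> last_commutators_subset by (auto simp: kernel_def)
  qed
qed

lemma kernel_phi: "kernel (G2 (Suc n)) (G2D n) (phi n) = Ncomm n"
proof
  show "kernel (G2 (Suc n)) (G2D n) (phi n) \<subseteq> Ncomm n"
  proof
    fix x
    assume "x \<in> kernel (G2 (Suc n)) (G2D n) (phi n)"
    then have "x \<in> carrier (G2 (Suc n))" "psi n (phi n x) = \<one>\<^bsub>G2Q n\<^esub>"
      using hom_one[OF psi_hom G2D.is_group G2Q.is_group] by (auto simp: kernel_def)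
    then show "x \<in> Ncomm n"
      using Ncomm.kernel_r_coset by (auto simp: kernel_def psi_phi)
  qed
qed (rule Ncomm_subset_kernel_phi)

theorem G2D_iso_G2Q: "G2D n \<cong> G2Q n"
proof -
  have "G2Q n \<cong> G2D n"
    using phi.FactGroup_iso[OF phi_surj] by (simp add: kernel_phi)
  then show ?thesis
    by (rule G2Q.iso_sym)
qed

theorem mainTheorem8:
  fixes n :: nat
  assumes "n > 2"
  shows "G2D n \<cong>
    (G2 (n + 1) Mod
      normal_closure (G2 (n + 1))
        {a_G2 (n + 1) i (n + 1) \<otimes>\<^bsub>G2 (n + 1)\<^esub> a_G2 (n + 1) j (n + 1)
           \<otimes>\<^bsub>G2 (n + 1)\<^esub> inv\<^bsub>G2 (n + 1)\<^esub> (a_G2 (n + 1) i (n + 1))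
           \<otimes>\<^bsub>G2 (n + 1)\<^esub> inv\<^bsub>G2 (n + 1)\<^esub> (a_G2 (n + 1) j (n + 1))
         | i j. i \<in> {1..n} \<and> j \<in> {1..n}})"
  using G2D_iso_G2Q[of n] by (simp add: Ncomm_def last_commutators_def)

end
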